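(* Let $k\ge 1$. For $j=1,\dots,k$ let $c_{a,j},c_{c,j}>0$, let $r_{a,j}:(0,\infty)\to(0,\infty)$ be positive, decreasing and at least twice continuously differentiable, and let $r_{c,j}:(0,\infty)\to(0,\infty)$ be positive, increasing and at least twice continuously differentiable. Let $w_j:(0,\infty)\to(0,\infty)$ and $\rho_j:(0,\infty)\to[-1,1]$ be given functions with $1-\rho_j^2(n)\le c_{a,j}r_{a,j}(n)$ and $w_j(n)\le c_{c,j}r_{c,j}(n)$; set $n_0^*=0$, $w_0(n_0^* )=1$. For a budget $p$, define sequentially: $u_1(n_1)=\frac{1}{p-n_1}\big(c_{a,1}r_{a,1}(n_1)+c_{c,1}r_{c,1}(n_1)\big)$ on $[1,p-1]$ with unique minimizer $n_1^*$, and for $j=2,\dots,k$, $$u_j(n_j)=\frac{1}{p_{j-1}-n_j}\Big(\kappa_{j-1}+\hat c_{a,j}r_{a,j}(n_j)+c_{c,j}r_{c,j}(n_j)\Big)\ \text{on } [1,p_{j-1}-1],$$ with unique minimizer $n_j^*$, where $p_{j-1}=p-\sum_{i=1}^{j-1}n_i^*$, $\kappa_{j-1}=\sum_{i=0}^{j-2}w_i(n_i^* )(1-\rho_{i+1}^2(n_{i+1}^* ))$, $\hat c_{a,j}=w_{j-1}(n_{j-1}^* )c_{a,j}$ (so $\hat c_{a,1}=c_{a,1}$). Assume that for each $j=1,\dots,k$, $$\hat c_{a,j}\,r_{a,j}''(n)+c_{c,j}\,r_{c,j}''(n)>0\quad\text{for all } n\in(0,\infty),$$ and that there exists $\bar n_j\in(0,\infty)$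 with $$\hat c_{a,j}\,r_{a,j}'(\bar n_j)+c_{c,j}\,r_{c,j}'(\bar n_j)=0.$$ Then there exist bounds $\bar n_1^*,\dots,\bar n_k^*$, independent of the budget $p$, such that $n_j^*\le \bar n_j^*$ for $j=1,\dots,k$.
   Context: Here $n_j$ is the number of high-fidelity evaluations used to train the $j$-th low-fidelity model in a context-aware multi-fidelity Monte Carlo estimator, $p$ is the total budget in units of high-fidelity evaluations, and $u_j$ is (up to constant factors) an upper bound of the estimator's mean-squared error in $n_j$ with the previously chosen $n_1^*,\dots,n_{j-1}^*$ fixed; the budgets are assumed large enough that all intervals $[1,p_{j-1}-1]$ are nonempty, and under the convexity hypotheses each $u_j$ has a unique minimizer $n_j^*$ there. *)

theory Defs
  imports "HOL-Analysis.Analysis"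
begin

text \<open>Sequential context-aware multi-fidelity allocation.
  Index j ranges over 1..k; ns j is the chosen n_j^* (ns 0 is unused, n_0^* = 0).\<close>

definition wst :: "(nat \<Rightarrow> real \<Rightarrow> real) \<Rightarrow> (nat \<Rightarrow> real) \<Rightarrow> nat \<Rightarrow> real" where
  "wst w ns i = (if i = 0 then 1 else w i (ns i))"

definition chat :: "(nat \<Rightarrow> real) \<Rightarrow> (nat \<Rightarrow> real \<Rightarrow> real) \<Rightarrow> (nat \<Rightarrow> real) \<Rightarrow> nat \<Rightarrow> real" where
  "chat ca w ns j = wst w ns (j - 1) * ca j"

definition kappa :: "(nat \<Rightarrow> real \<Rightarrow> real) \<Rightarrow> (nat \<Rightarrow> real \<Rightarrow> real) \<Rightarrow> (nat \<Rightarrow> real) \<Rightarrow> nat \<Rightarrow> real" where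
  "kappa w rho ns m = (\<Sum>i<m. wst w ns i * (1 - (rho (Suc i) (ns (Suc i)))\<^sup>2))"

definition pbud :: "real \<Rightarrow> (nat \<Rightarrow> real) \<Rightarrow> nat \<Rightarrow> real" where
  "pbud p ns m = p - (\<Sum>i\<in>{1..m}. ns i)"

definition uobj :: "(nat \<Rightarrow> real) \<Rightarrow> (nat \<Rightarrow> real) \<Rightarrow> (nat \<Rightarrow> real \<Rightarrow> real) \<Rightarrow> (nat \<Rightarrow> real \<Rightarrow> real)
    \<Rightarrow> (nat \<Rightarrow> real \<Rightarrow> real) \<Rightarrow> (nat \<Rightarrow> real \<Rightarrow> real) \<Rightarrow> real \<Rightarrow> (nat \<Rightarrow> real) \<Rightarrow> nat \<Rightarrow> real \<Rightarrow> real" where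
  "uobj ca cc ra rc w rho p ns j x =
     (kappa w rho ns (j - 1) + chat ca w ns j * ra j x + cc j * rc j x) / (pbud p ns (j - 1) - x)"

definition opt_seq :: "nat \<Rightarrow> (nat \<Rightarrow> real) \<Rightarrow> (nat \<Rightarrow> real) \<Rightarrow> (nat \<Rightarrow> real \<Rightarrow> real) \<Rightarrow> (nat \<Rightarrow> real \<Rightarrow> real)
    \<Rightarrow> (nat \<Rightarrow> real \<Rightarrow> real) \<Rightarrow> (nat \<Rightarrow> real \<Rightarrow> real) \<Rightarrow> real \<Rightarrow> (nat \<Rightarrow> real) \<Rightarrow> bool" where
  "opt_seq k ca cc ra rc w rho p ns =
     (\<forall>j\<in>{1..k}.
        1 \<le> pbud p ns (j - 1) - 1 \<and>
        1 \<le> ns j \<and> ns j \<le> pbud p ns (j - 1) - 1 \<and>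
        (\<forall>x. 1 \<le> x \<and> x \<le> pbud p ns (j - 1) - 1 \<and> x \<noteq> ns j \<longrightarrow>
              uobj ca cc ra rc w rho p ns j (ns j) < uobj ca cc ra rc w rho p ns j x))"

end

theory Submission
  imports Defs
begin

text \<open>
  Write f_A = A r_a' + c_c r_c', the derivative of the numerator of u_j when r_a carries the
  weight A. At a minimizer n_j^* > 1 of u_j the left derivative of u_j is nonpositive, and since
  the numerator is positive this forces f_A(n_j^*) < 0 for A = hat c_{a,j}. By the convexity
  hypothesis every f_A is increasing, and a reference optimal sequence supplies a weight A_0
  with a root N of f_{A_0}; neither depends on the budget. As r_a' <= 0, on [N + 1, n_j^*] we
  have (A - A_0) r_a' = f_A - f_{A_0} <= -f_{A_0}(N + 1) < 0, and integrating gives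
  n_j^* - (N + 1) <= (A - A_0) r_a(N + 1) / f_{A_0}(N + 1). So a bound on hat c_{a,j} bounds
  n_j^*, and since r_{c,j} increases, a bound on n_j^* bounds
  hat c_{a,j+1} = w_j(n_j^*) c_{a,j+1} <= c_{c,j} r_{c,j}(n_j^*) c_{a,j+1}.\<close>

lemma deriv_neg_at_ratio_min:
  fixes g :: "real \<Rightarrow> real"
  assumes "a < y" "y < Q"
    and min: "\<forall>x\<in>{a..y}. g y / (Q - y) \<le> g x / (Q - x)"
    and g': "(g has_real_derivative d) (at y)"
    and "g y > 0"
  shows "d < 0"
proof -
  have ratio': "((\<lambda>x. g x / (Q - x)) has_real_derivative (d * (Q - y) + g y) / (Q - y)\<^sup>2) (at y)"
    using g' \<open>y < Q\<close> by (auto intro!: derivative_eq_intros simp: power2_eq_square)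
  have "(d * (Q - y) + g y) / (Q - y)\<^sup>2 \<le> 0"
  proof (rule ccontr)
    assume "\<not> ?thesis"
    then obtain e where "e > 0" and e: "\<forall>h>0. h < e \<longrightarrow> g (y - h) / (Q - (y - h)) < g y / (Q - y)"
      using DERIV_pos_inc_left[OF ratio'] by force
    define h where "h = min (e / 2) (y - a)"
    have "h > 0" "h < e" "y - h \<in> {a..y}"
      using \<open>e > 0\<close> \<open>a < y\<close> by (auto simp: h_def)
    then show False
      using e min by fastforce
  qed
  then have "d * (Q - y) < 0"
    using \<open>y < Q\<close> \<open>g y > 0\<close> by (simp add: divide_le_0_iff)
  then show ?thesis
    using \<open>y < Q\<close> by (simp add: mult_less_0_iff)
qed

lemma root_shift_bound:
  fixes r r' s' :: "real \<Rightarrow> real" and A B a y :: real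
  assumes "a \<le> y"
    and r': "\<forall>x\<in>{a..y}. (r has_real_derivative r' x) (at x)"
    and "r' a \<le> 0" and "r y \<ge> 0"
    and mono_A: "mono_on {a..y} (\<lambda>x. A * r' x + s' x)"
    and mono_B: "mono_on {a..y} (\<lambda>x. B * r' x + s' x)"
    and nonneg_A: "A * r' a + s' a \<ge> 0"
    and neg_B: "B * r' y + s' y < 0"
  shows "(A * r' a + s' a) * (y - a) \<le> (B - A) * r a"
proof -
  define c where "c = A * r' a + s' a"
  have gap: "(B - A) * r' x + c < 0" if "x \<in> {a..y}" for x
  proof -
    have "c \<le> A * r' x + s' x" "B * r' x + s' x \<le> B * r' y + s' y"
      using mono_onD[OF mono_A, of a x] mono_onD[OF mono_B, of x y] that \<open>a \<le> y\<close>
      by (auto simp: c_def)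
    then show ?thesis
      using neg_B by (simp add: algebra_simps)
  qed
  have "A < B"
  proof (rule ccontr)
    assume "\<not> A < B"
    then have "(B - A) * r' a \<ge> 0"
      using \<open>r' a \<le> 0\<close> by (simp add: mult_nonpos_nonpos)
    then show False
      using gap[of a] \<open>a \<le> y\<close> nonneg_A by (simp add: c_def)
  qed
  have "(B - A) * r y + c * y \<le> (B - A) * r a + c * a"
  proof (rule DERIV_nonpos_imp_nonincreasing[OF \<open>a \<le> y\<close>])
    fix x assume "a \<le> x" "x \<le> y"
    then have "((\<lambda>x. (B - A) * r x + c * x) has_real_derivative (B - A) * r' x + c) (at x)"
      using r' by (auto intro!: derivative_eq_intros)
    then show "\<exists>d. ((\<lambda>x. (B - A) * r x + c * x) has_real_derivative d) (at x) \<and> d \<le> 0"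
      using gap \<open>a \<le> x\<close> \<open>x \<le> y\<close> by force
  qed
  moreover have "(B - A) * r y \<ge> 0"
    using \<open>A < B\<close> \<open>r y \<ge> 0\<close> by simp
  ultimately show ?thesis
    by (simp add: c_def algebra_simps)
qed

lemma ratio_minimizer_bound:
  fixes ra rc ra' rc' ra'' rc'' :: "real \<Rightarrow> real"
  assumes ra_pos: "\<forall>x>0. ra x > 0" and rc_pos: "\<forall>x>0. rc x > 0"
    and ra'_nonpos: "\<forall>x>0. ra' x \<le> 0"
    and ra': "\<forall>x>0. (ra has_real_derivative ra' x) (at x)"
    and ra'': "\<forall>x>0. (ra' has_real_derivative ra'' x) (at x)"
    and rc': "\<forall>x>0. (rc has_real_derivative rc' x) (at x)"
    and rc'': "\<forall>x>0. (rc' has_real_derivative rc'' x) (at x)"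
    and "C > 0"
    and "0 < A0" "A0 \<le> Amax" "0 < N"
    and convex_A0: "\<forall>x>0. A0 * ra'' x + C * rc'' x > 0"
    and stationary_A0: "A0 * ra' N + C * rc' N = 0"
    and "0 \<le> A" "A \<le> Amax" "0 \<le> K"
    and convex_A: "\<forall>x>0. A * ra'' x + C * rc'' x > 0"
    and "1 \<le> y" "y \<le> Q - 1"
    and min: "\<forall>x\<in>{1..Q - 1}.
      (K + A * ra y + C * rc y) / (Q - y) \<le> (K + A * ra x + C * rc x) / (Q - x)"
  shows "y \<le> N + 1 + (Amax - A0) * ra (N + 1) / (A0 * ra' (N + 1) + C * rc' (N + 1))"
proof -
  have increasing: "B * ra' x + C * rc' x < B * ra' z + C * rc' z"
    if convex: "\<forall>x>0. B * ra'' x + C * rc'' x > 0" and "0 < x" "x < z" for B x z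
  proof (rule DERIV_pos_imp_increasing[OF \<open>x < z\<close>])
    fix t assume "x \<le> t"
    then have "t > 0"
      using \<open>0 < x\<close> by simp
    then have "((\<lambda>x. B * ra' x + C * rc' x) has_real_derivative B * ra'' t + C * rc'' t) (at t)"
      using ra'' rc'' by (auto intro!: derivative_eq_intros)
    then show "\<exists>d. ((\<lambda>x. B * ra' x + C * rc' x) has_real_derivative d) (at t) \<and> d > 0"
      using convex \<open>t > 0\<close> by blast
  qed
  have mono: "mono_on {N + 1..y} (\<lambda>x. B * ra' x + C * rc' x)"
    if convex: "\<forall>x>0. B * ra'' x + C * rc'' x > 0" for B
  proof (rule mono_onI)
    fix x z assume "x \<in> {N + 1..y}" "x \<le> z"
    then show "B * ra' x + C * rc' x \<le> B * ra' z + C * rc' z"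
      using increasing[OF convex, of x z] \<open>0 < N\<close> by (cases "x = z") auto
  qed
  define c where "c = A0 * ra' (N + 1) + C * rc' (N + 1)"
  have "c > 0"
    using increasing[OF convex_A0, of N "N + 1"] \<open>0 < N\<close> stationary_A0 by (simp add: c_def)
  show ?thesis
  proof (cases "y \<le> N + 1")
    case True
    have "ra (N + 1) > 0"
      using ra_pos \<open>0 < N\<close> by simp
    then have "(Amax - A0) * ra (N + 1) / c \<ge> 0"
      using \<open>c > 0\<close> \<open>A0 \<le> Amax\<close> by simp
    with True show ?thesis by (simp add: c_def)
  next
    case False
    define g where "g = (\<lambda>x. K + A * ra x + C * rc x)"
    have "y > 0"
      using \<open>1 \<le> y\<close> by simp
    then have "(g has_real_derivative A * ra' y + C * rc' y) (at y)"
      using ra' rc' by (auto simp: g_def intro!: derivative_eq_intros)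
    moreover have "g y > 0"
    proof -
      have "A * ra y \<ge> 0" "C * rc y > 0"
        using ra_pos rc_pos \<open>y > 0\<close> \<open>0 \<le> A\<close> \<open>C > 0\<close> by (simp_all add: less_imp_le)
      then show ?thesis
        using \<open>0 \<le> K\<close> by (simp add: g_def)
    qed
    moreover have "1 < y"
      using False \<open>0 < N\<close> by simp
    ultimately have "A * ra' y + C * rc' y < 0"
      using deriv_neg_at_ratio_min[of 1 y Q g] min \<open>y \<le> Q - 1\<close> by (simp add: g_def)
    then have "c * (y - (N + 1)) \<le> (A - A0) * ra (N + 1)"
      using \<open>c > 0\<close> False \<open>0 < N\<close> ra' ra'_nonpos ra_pos[rule_format, OF \<open>y > 0\<close>]
      unfolding c_def by (intro root_shift_bound mono convex_A convex_A0) auto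
    also have "\<dots> \<le> (Amax - A0) * ra (N + 1)"
      using \<open>A \<le> Amax\<close> ra_pos \<open>0 < N\<close> by simp
    finally show ?thesis
      using \<open>c > 0\<close> by (simp add: c_def field_simps)
  qed
qed

lemma opt_seq_minimizer:
  assumes "opt_seq k ca cc ra rc w rho p ns" "j \<in> {1..k}"
  shows "1 \<le> ns j" "ns j \<le> pbud p ns (j - 1) - 1"
    and "\<forall>x\<in>{1..pbud p ns (j - 1) - 1}.
      uobj ca cc ra rc w rho p ns j (ns j) \<le> uobj ca cc ra rc w rho p ns j x"
  using assms unfolding opt_seq_def by (fastforce simp: le_less)+

lemma opt_seq_wst_pos:
  assumes "opt_seq k ca cc ra rc w rho p ns" "i < k"
    and w_pos: "\<forall>j\<in>{1..k}. \<forall>x>0. w j x > 0"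
  shows "wst w ns i > 0"
proof (cases "i = 0")
  case False
  then have "i \<in> {1..k}"
    using \<open>i < k\<close> by simp
  then have "ns i > 0"
    using opt_seq_minimizer(1)[OF assms(1)] by fastforce
  then show ?thesis
    using w_pos \<open>i \<in> {1..k}\<close> False by (simp add: wst_def)
qed (simp add: wst_def)

lemma opt_seq_chat_pos:
  assumes "opt_seq k ca cc ra rc w rho p ns" "j \<in> {1..k}" "ca j > 0"
    and w_pos: "\<forall>j\<in>{1..k}. \<forall>x>0. w j x > 0"
  shows "chat ca w ns j > 0"
proof -
  have "j - 1 < k"
    using \<open>j \<in> {1..k}\<close> by auto
  then show ?thesis
    using opt_seq_wst_pos[OF assms(1) _ w_pos] \<open>ca j > 0\<close> by (simp add: chat_def)
qed

lemma opt_seq_kappa_nonneg: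
  assumes "opt_seq k ca cc ra rc w rho p ns" "j \<in> {1..k}"
    and w_pos: "\<forall>j\<in>{1..k}. \<forall>x>0. w j x > 0"
    and rho_bd: "\<forall>j\<in>{1..k}. \<forall>x>0. -1 \<le> rho j x \<and> rho j x \<le> 1"
  shows "kappa w rho ns (j - 1) \<ge> 0"
  unfolding kappa_def
proof (rule sum_nonneg)
  fix i assume "i \<in> {..<j - 1}"
  then have "i < k" "Suc i \<in> {1..k}"
    using \<open>j \<in> {1..k}\<close> by auto
  moreover have "ns (Suc i) > 0"
    using opt_seq_minimizer(1)[OF assms(1) \<open>Suc i \<in> {1..k}\<close>] by simp
  ultimately have "\<bar>rho (Suc i) (ns (Suc i))\<bar> \<le> 1"
    using rho_bd by (simp add: abs_le_iff)
  then have "(rho (Suc i) (ns (Suc i)))\<^sup>2 \<le> 1"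
    by (simp add: abs_square_le_1)
  then show "0 \<le> wst w ns i * (1 - (rho (Suc i) (ns (Suc i)))\<^sup>2)"
    using opt_seq_wst_pos[OF assms(1) \<open>i < k\<close> w_pos] by simp
qed

lemma opt_seq_ns_bounded:
  assumes j: "j \<in> {1..k}"
    and c_pos: "\<forall>j\<in>{1..k}. ca j > 0 \<and> cc j > 0"
    and ra_pos: "\<forall>j\<in>{1..k}. \<forall>x>0. ra j x > 0"
    and ra_dec: "\<forall>j\<in>{1..k}. \<forall>x y. 0 < x \<and> x \<le> y \<longrightarrow> ra j y \<le> ra j x"
    and ra_d1: "\<forall>j\<in>{1..k}. \<forall>x>0. (ra j has_real_derivative ra1 j x) (at x)"
    and ra_d2: "\<forall>j\<in>{1..k}. \<forall>x>0. (ra1 j has_real_derivative ra2 j x) (at x)"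
    and rc_pos: "\<forall>j\<in>{1..k}. \<forall>x>0. rc j x > 0"
    and rc_d1: "\<forall>j\<in>{1..k}. \<forall>x>0. (rc j has_real_derivative rc1 j x) (at x)"
    and rc_d2: "\<forall>j\<in>{1..k}. \<forall>x>0. (rc1 j has_real_derivative rc2 j x) (at x)"
    and w_pos: "\<forall>j\<in>{1..k}. \<forall>x>0. w j x > 0"
    and rho_bd: "\<forall>j\<in>{1..k}. \<forall>x>0. -1 \<le> rho j x \<and> rho j x \<le> 1"
    and convex_stat: "\<forall>p ns. opt_seq k ca cc ra rc w rho p ns \<longrightarrow>
           (\<forall>j\<in>{1..k}.
              (\<forall>x>0. chat ca w ns j * ra2 j x + cc j * rc2 j x > 0) \<and>
              (\<exists>nb>0. chat ca w ns j * ra1 j nb + cc j * rc1 j nb = 0))"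
    and chat_le: "\<forall>p ns. opt_seq k ca cc ra rc w rho p ns \<longrightarrow> chat ca w ns j \<le> Amax"
  shows "\<exists>b. \<forall>p ns. opt_seq k ca cc ra rc w rho p ns \<longrightarrow> ns j \<le> b"
proof (cases "\<exists>p ns. opt_seq k ca cc ra rc w rho p ns")
  case True
  then obtain p\<^sub>0 ns\<^sub>0 where ref: "opt_seq k ca cc ra rc w rho p\<^sub>0 ns\<^sub>0"
    by blast
  define A0 where "A0 = chat ca w ns\<^sub>0 j"
  have "A0 > 0"
    using opt_seq_chat_pos[OF ref j _ w_pos] c_pos j by (simp add: A0_def)
  have convex_A0: "\<forall>x>0. A0 * ra2 j x + cc j * rc2 j x > 0"
    using convex_stat ref j by (simp add: A0_def)
  obtain N where "N > 0" and stationary: "A0 * ra1 j N + cc j * rc1 j N = 0"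
    using convex_stat ref j unfolding A0_def by blast
  have ra1_nonpos: "\<forall>x>0. ra1 j x \<le> 0"
  proof (intro allI impI)
    fix x :: real assume "x > 0"
    have "mono_on {0<..} (\<lambda>x. - ra j x)"
      using ra_dec j by (auto intro!: mono_onI)
    moreover have "((\<lambda>x. - ra j x) has_real_derivative - ra1 j x) (at x)"
      using ra_d1 j \<open>x > 0\<close> by (auto intro!: derivative_eq_intros)
    ultimately have "- ra1 j x \<ge> 0"
      using \<open>x > 0\<close> by (intro mono_on_imp_deriv_nonneg) (auto simp: interior_open)
    then show "ra1 j x \<le> 0"
      by simp
  qed
  show ?thesis
  proof (intro exI allI impI)
    fix p ns assume opt: "opt_seq k ca cc ra rc w rho p ns"
    define A where "A = chat ca w ns j"
    define K where "K = kappa w rho ns (j - 1)"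
    define Q where "Q = pbud p ns (j - 1)"
    have "A0 \<le> Amax"
      using chat_le ref by (simp add: A0_def)
    moreover have "0 \<le> A" "A \<le> Amax"
      using opt_seq_chat_pos[OF opt j _ w_pos] c_pos j chat_le opt by (auto simp: A_def less_imp_le)
    moreover have "0 \<le> K"
      using opt_seq_kappa_nonneg[OF opt j w_pos rho_bd] by (simp add: K_def)
    moreover have "\<forall>x>0. A * ra2 j x + cc j * rc2 j x > 0"
      using convex_stat opt j by (simp add: A_def)
    moreover have "1 \<le> ns j" "ns j \<le> Q - 1"
      using opt_seq_minimizer(1,2)[OF opt j] by (simp_all add: Q_def)
    moreover have "\<forall>x\<in>{1..Q - 1}.
        (K + A * ra j (ns j) + cc j * rc j (ns j)) / (Q - ns j) \<le> (K + A * ra j x + cc j * rc j x) / (Q - x)"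
      using opt_seq_minimizer(3)[OF opt j] by (simp add: uobj_def A_def K_def Q_def)
    ultimately show "ns j \<le> N + 1 + (Amax - A0) * ra j (N + 1) / (A0 * ra1 j (N + 1) + cc j * rc1 j (N + 1))"
      using bspec[OF c_pos j]
      by (intro ratio_minimizer_bound[OF bspec[OF ra_pos j] bspec[OF rc_pos j] ra1_nonpos
            bspec[OF ra_d1 j] bspec[OF ra_d2 j] bspec[OF rc_d1 j] bspec[OF rc_d2 j] _
            \<open>A0 > 0\<close> _ \<open>N > 0\<close> convex_A0 stationary]) simp_all
  qed
qed blast

lemma opt_seq_chat_Suc_le:
  assumes "opt_seq k ca cc ra rc w rho p ns" "j \<in> {1..k}" "Suc j \<le> k" "ns j \<le> b"
    and c_pos: "\<forall>j\<in>{1..k}. ca j > 0 \<and> cc j > 0"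
    and rc_inc: "\<forall>j\<in>{1..k}. \<forall>x y. 0 < x \<and> x \<le> y \<longrightarrow> rc j x \<le> rc j y"
    and w_rc: "\<forall>j\<in>{1..k}. \<forall>x>0. w j x \<le> cc j * rc j x"
  shows "chat ca w ns (Suc j) \<le> cc j * rc j b * ca (Suc j)"
proof -
  have "ns j > 0"
    using opt_seq_minimizer(1)[OF assms(1,2)] by simp
  then have "w j (ns j) \<le> cc j * rc j (ns j)"
    using w_rc \<open>j \<in> {1..k}\<close> by simp
  also have "\<dots> \<le> cc j * rc j b"
    using rc_inc c_pos \<open>j \<in> {1..k}\<close> \<open>ns j > 0\<close> \<open>ns j \<le> b\<close> by (simp add: less_imp_le)
  finally have "w j (ns j) * ca (Suc j) \<le> cc j * rc j b * ca (Suc j)"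
    using c_pos \<open>Suc j \<le> k\<close> by (simp add: less_imp_le mult_right_mono)
  then show ?thesis
    using \<open>j \<in> {1..k}\<close> by (simp add: chat_def wst_def)
qed

theorem proposition4:
  fixes k :: nat
    and ca cc :: "nat \<Rightarrow> real"
    and ra ra1 ra2 rc rc1 rc2 w rho :: "nat \<Rightarrow> real \<Rightarrow> real"
  assumes k: "k \<ge> 1"
    and c_pos: "\<forall>j\<in>{1..k}. ca j > 0 \<and> cc j > 0"
    and ra_pos: "\<forall>j\<in>{1..k}. \<forall>x>0. ra j x > 0"
    and ra_dec: "\<forall>j\<in>{1..k}. \<forall>x y. 0 < x \<and> x \<le> y \<longrightarrow> ra j y \<le> ra j x"
    and ra_d1: "\<forall>j\<in>{1..k}. \<forall>x>0. (ra j has_real_derivative ra1 j x) (at x)"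
    and ra_d2: "\<forall>j\<in>{1..k}. \<forall>x>0. (ra1 j has_real_derivative ra2 j x) (at x)"
    and ra_c2: "\<forall>j\<in>{1..k}. continuous_on {0<..} (ra2 j)"
    and rc_pos: "\<forall>j\<in>{1..k}. \<forall>x>0. rc j x > 0"
    and rc_inc: "\<forall>j\<in>{1..k}. \<forall>x y. 0 < x \<and> x \<le> y \<longrightarrow> rc j x \<le> rc j y"
    and rc_d1: "\<forall>j\<in>{1..k}. \<forall>x>0. (rc j has_real_derivative rc1 j x) (at x)"
    and rc_d2: "\<forall>j\<in>{1..k}. \<forall>x>0. (rc1 j has_real_derivative rc2 j x) (at x)"
    and rc_c2: "\<forall>j\<in>{1..k}. continuous_on {0<..} (rc2 j)"
    and w_pos: "\<forall>j\<in>{1..k}. \<forall>x>0. w j x > 0"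
    and rho_bd: "\<forall>j\<in>{1..k}. \<forall>x>0. -1 \<le> rho j x \<and> rho j x \<le> 1"
    and rho_ra: "\<forall>j\<in>{1..k}. \<forall>x>0. 1 - (rho j x)\<^sup>2 \<le> ca j * ra j x"
    and w_rc: "\<forall>j\<in>{1..k}. \<forall>x>0. w j x \<le> cc j * rc j x"
    and convex_stat: "\<forall>p ns. opt_seq k ca cc ra rc w rho p ns \<longrightarrow>
           (\<forall>j\<in>{1..k}.
              (\<forall>x>0. chat ca w ns j * ra2 j x + cc j * rc2 j x > 0) \<and>
              (\<exists>nb>0. chat ca w ns j * ra1 j nb + cc j * rc1 j nb = 0))"
  shows "\<exists>B :: nat \<Rightarrow> real. \<forall>p ns. opt_seq k ca cc ra rc w rho p ns \<longrightarrow>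
           (\<forall>j\<in>{1..k}. ns j \<le> B j)"
proof -
  have "\<exists>b. \<forall>p ns. opt_seq k ca cc ra rc w rho p ns \<longrightarrow> ns j \<le> b" if "j \<in> {1..k}" for j
    using that
  proof (induction j)
    case (Suc j)
    have "\<exists>A. \<forall>p ns. opt_seq k ca cc ra rc w rho p ns \<longrightarrow> chat ca w ns (Suc j) \<le> A"
    proof (cases "j = 0")
      case True
      then show ?thesis
        by (auto simp: chat_def wst_def)
    next
      case False
      then have j: "j \<in> {1..k}" "Suc j \<le> k"
        using Suc.prems by auto
      with Suc.IH obtain b where "\<forall>p ns. opt_seq k ca cc ra rc w rho p ns \<longrightarrow> ns j \<le> b"
        by blast
      then show ?thesis
        using opt_seq_chat_Suc_le[OF _ j _ c_pos rc_inc w_rc] by blast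
    qed
    then obtain A where "\<forall>p ns. opt_seq k ca cc ra rc w rho p ns \<longrightarrow> chat ca w ns (Suc j) \<le> A"
      by blast
    then show ?case
      by (rule opt_seq_ns_bounded[OF Suc.prems c_pos ra_pos ra_dec ra_d1 ra_d2 rc_pos rc_d1 rc_d2
            w_pos rho_bd convex_stat])
  qed simp
  then show ?thesis
    by metis
qed

end
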